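(* Let $G=(S,T,\pi)$ be a countable two-person win-lose game such that the family $\mathcal{B}^1_{\downarrow}(G)$ is ascending-union closed. Then for every $\mathbf{q}\in\Delta(T)$ the supremum $\sup_{\mathbf{p}\in\Delta(S)}\pi^{\mathrm{mix}}(\mathbf{p},\mathbf{q})$ is attained, the supremum $\sup_{\mathbf{p}\in\Delta(S)}\inf_{\mathbf{q}\in\Delta(T)}\pi^{\mathrm{mix}}(\mathbf{p},\mathbf{q})$ is attained, and $$\max_{\mathbf{p}\in\Delta(S)}\inf_{\mathbf{q}\in\Delta(T)}\pi^{\mathrm{mix}}(\mathbf{p},\mathbf{q})=\inf_{\mathbf{q}\in\Delta(T)}\max_{\mathbf{p}\in\Delta(S)}\pi^{\mathrm{mix}}(\mathbf{p},\mathbf{q}).$$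
   Context: A two-person win-lose game is a triple $G=(S,T,\pi)$ where $S,T$ are non-empty sets (possibly infinite) and $\pi:S\times T\to\{0,1\}$. It is countable if $|S|=|T|=\aleph_0$. For a set $X$, $\Delta(X)$ denotes the set of probability distributions $\mathbf{p}=(p_x)_{x\in X}$ on $X$ with at most countable support ($p_x\ge 0$, $\sum_x p_x=1$). For $\mathbf{p}\in\Delta(S)$, $\mathbf{q}\in\Delta(T)$, $\pi^{\mathrm{mix}}(\mathbf{p},\mathbf{q})=\sum_{s,t}p_sq_t\pi(s,t)$. For $s\in S$ let $B_s=\{t\in T:\pi(s,t)=1\}$, let $\mathcal{B}^1(G)=\{B_s:s\in S\}$, and let $\mathcal{B}^1_{\downarrow}(G)=\{A\subseteq T:\exists s\in S,\ A\subseteq B_s\}$. A family $\mathcal{F}$ of sets is ascending-union closed if whenever $A_i\in\mathcal{F}$ for $i=1,2,\ldots$ and $A_1\subset A_2\subset\cdots$, then $\bigcup_{i=1}^\infty A_i\in\mathcal{F}$. *)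

theory Defs
  imports "HOL-Analysis.Analysis"
begin

definition win_lose_game :: "'a set \<Rightarrow> 'b set \<Rightarrow> ('a \<Rightarrow> 'b \<Rightarrow> real) \<Rightarrow> bool" where
  "win_lose_game S T \<pi> \<longleftrightarrow> S \<noteq> {} \<and> T \<noteq> {} \<and> (\<forall>s\<in>S. \<forall>t\<in>T. \<pi> s t \<in> {0, 1})"

definition countable_game :: "'a set \<Rightarrow> 'b set \<Rightarrow> ('a \<Rightarrow> 'b \<Rightarrow> real) \<Rightarrow> bool" where
  "countable_game S T \<pi> \<longleftrightarrow> win_lose_game S T \<pi> \<and>
     countable S \<and> infinite S \<and> countable T \<and> infinite T"

definition Dist :: "'a set \<Rightarrow> ('a \<Rightarrow> real) set" where
  "Dist X = {p. (\<forall>x. p x \<ge> 0) \<and> (\<forall>x. x \<notin> X \<longrightarrow> p x = 0)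
              \<and> countable {x. p x \<noteq> 0} \<and> (p has_sum 1) X}"

definition pi_mix :: "'a set \<Rightarrow> 'b set \<Rightarrow> ('a \<Rightarrow> 'b \<Rightarrow> real) \<Rightarrow> ('a \<Rightarrow> real) \<Rightarrow> ('b \<Rightarrow> real) \<Rightarrow> real" where
  "pi_mix S T \<pi> p q = (\<Sum>\<^sub>\<infinity>(s, t)\<in>S \<times> T. p s * q t * \<pi> s t)"

definition win_set :: "'b set \<Rightarrow> ('a \<Rightarrow> 'b \<Rightarrow> real) \<Rightarrow> 'a \<Rightarrow> 'b set" where
  "win_set T \<pi> s = {t\<in>T. \<pi> s t = 1}"

definition B1_down :: "'a set \<Rightarrow> 'b set \<Rightarrow> ('a \<Rightarrow> 'b \<Rightarrow> real) \<Rightarrow> 'b set set" where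
  "B1_down S T \<pi> = {A. \<exists>s\<in>S. A \<subseteq> win_set T \<pi> s}"

definition ascending_union_closed :: "'c set set \<Rightarrow> bool" where
  "ascending_union_closed F \<longleftrightarrow>
     (\<forall>A :: nat \<Rightarrow> 'c set. (\<forall>i. A i \<in> F) \<and> (\<forall>i. A i \<subset> A (Suc i)) \<longrightarrow> (\<Union>i. A i) \<in> F)"

end

theory Submission
  imports Defs "HOL-Library.Nat_Bijection"
begin

text \<open>Enumerate \<open>S\<close> and \<open>T\<close> by the natural numbers, so that the pure strategy \<open>k\<close> of the
  first player wins exactly against the columns in a set \<open>W k \<subseteq> \<nat>\<close>. Ascending-union closedness
  says that a set of columns each of whose finite initial segments is beaten by a single row is
  itself beaten by a single row. A Koenig-type argument along the binary tree of initial segments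
  turns this into two compactness statements: every mixed strategy \<open>q\<close> of the second player has a
  pure best reply, and a limit of finite mixed strategies of the first player loses no mass.

  Let \<open>v\<close> be the upper value. The finite minimax theorem (proved by multiplicative weights) gives,
  for every \<open>n\<close>, a uniform distribution on a finite list of rows guaranteeing \<open>v - 1/(n+1)\<close> against
  the first \<open>n\<close> columns. Along a subsequence, the frequency of every event depending only on a
  finite initial segment of the winning set converges; tightness makes the limit a probability
  distribution on the rows, and it guarantees \<open>v\<close> against every column.\<close>

section \<open>Koenig's lemma for the binary tree\<close>

primrec greedy_branch :: "(nat \<Rightarrow> nat set \<Rightarrow> bool) \<Rightarrow> nat \<Rightarrow> nat set" where
  "greedy_branch good 0 = {}"
| "greedy_branch good (Suc m) =
     (if good (Suc m) (greedy_branch good m) then greedy_branch good m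
      else insert m (greedy_branch good m))"

lemma greedy_branch_subset: "greedy_branch good m \<subseteq> {..<m}"
  by (induction m) auto

lemma greedy_branch_Suc_restrict: "greedy_branch good (Suc m) \<inter> {..<m} = greedy_branch good m"
  using greedy_branch_subset[of good m] by auto

lemma greedy_branch_restrict:
  assumes "n \<le> m"
  shows "greedy_branch good m \<inter> {..<n} = greedy_branch good n"
  using assms
proof (induction m)
  case (Suc m)
  show ?case
  proof (cases "n = Suc m")
    case False
    with Suc.prems have "n \<le> m" by simp
    hence "{..<m} \<inter> {..<n} = {..<n}" by auto
    hence "greedy_branch good (Suc m) \<inter> {..<n} = greedy_branch good (Suc m) \<inter> {..<m} \<inter> {..<n}"
      by (simp only: Int_assoc)
    with Suc.IH[OF \<open>n \<le> m\<close>] show ?thesis by (simp only: greedy_branch_Suc_restrict)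
  qed (use greedy_branch_subset in blast)
qed simp

lemma binary_tree_branch:
  assumes root: "good 0 {}"
    and step: "\<And>m P. good m P \<Longrightarrow> good (Suc m) P \<or> good (Suc m) (insert m P)"
  obtains A where "\<And>m. good m (A \<inter> {..<m})"
proof
  let ?B = "greedy_branch good"
  have good_branch: "good m (?B m)" for m
    by (induction m) (use root step in auto)
  have "{i. i \<in> ?B (Suc i)} \<inter> {..<m} = ?B m" for m
  proof (rule set_eqI)
    fix i
    show "i \<in> {i. i \<in> ?B (Suc i)} \<inter> {..<m} \<longleftrightarrow> i \<in> ?B m"
    proof (cases "i < m")
      case True
      hence "?B m \<inter> {..<Suc i} = ?B (Suc i)" by (intro greedy_branch_restrict) simp
      thus ?thesis using True by blast
    qed (use greedy_branch_subset in blast)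
  qed
  thus "good m ({i. i \<in> ?B (Suc i)} \<inter> {..<m})" for m
    using good_branch by simp
qed

lemma Int_lessThan_Suc:
  "A \<inter> {..<Suc m} = (if m \<in> A then insert m (A \<inter> {..<m}) else A \<inter> {..<m})"
  by (auto simp: lessThan_Suc)

section \<open>Frequencies of prefix-determined events\<close>

definition freq :: "'a list \<Rightarrow> ('a \<Rightarrow> bool) \<Rightarrow> real" where
  "freq ks Q = real (length (filter Q ks)) / real (length ks)"

lemma freq_nonneg: "0 \<le> freq ks Q"
  by (simp add: freq_def)

lemma freq_le_1: "freq ks Q \<le> 1"
proof (cases "ks = []")
  case False
  have "real (length (filter Q ks)) \<le> real (length ks)" by simp
  thus ?thesis unfolding freq_def using False by (simp add: divide_le_eq_1)
qed (simp add: freq_def)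

lemma freq_const: "ks \<noteq> [] \<Longrightarrow> freq ks (\<lambda>_. c) = (if c then 1 else 0)"
  by (simp add: freq_def)

lemma freq_mono:
  assumes "\<And>k. Q k \<Longrightarrow> R k"
  shows "freq ks Q \<le> freq ks R"
proof -
  have "length (filter Q ks) \<le> length (filter R ks)"
    using assms by (induction ks) auto
  thus ?thesis by (simp add: freq_def divide_right_mono)
qed

lemma length_filter_disj_conj:
  "length (filter (\<lambda>k. Q k \<or> R k) ks) + length (filter (\<lambda>k. Q k \<and> R k) ks)
    = length (filter Q ks) + length (filter R ks)"
  by (induction ks) auto

lemma freq_disj_conj:
  "freq ks (\<lambda>k. Q k \<or> R k) + freq ks (\<lambda>k. Q k \<and> R k) = freq ks Q + freq ks R"
proof -
  have "real (length (filter (\<lambda>k. Q k \<or> R k) ks)) + real (length (filter (\<lambda>k. Q k \<and> R k) ks))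
      = real (length (filter Q ks)) + real (length (filter R ks))"
    using length_filter_disj_conj[of Q R ks] by linarith
  thus ?thesis unfolding freq_def add_divide_distrib[symmetric] by simp
qed

definition prefix_determined :: "(nat \<Rightarrow> nat set) \<Rightarrow> (nat \<Rightarrow> bool) \<Rightarrow> bool" where
  "prefix_determined W Q \<longleftrightarrow> (\<exists>m. \<forall>k k'. W k \<inter> {..<m} = W k' \<inter> {..<m} \<longrightarrow> Q k = Q k')"

lemma prefix_determined_prefix: "prefix_determined W (\<lambda>k. \<Phi> (W k \<inter> {..<m}))"
  unfolding prefix_determined_def by (intro exI[of _ m]) simp

lemma prefix_determined_member: "prefix_determined W (\<lambda>k. i \<in> W k)"
  using prefix_determined_prefix[of W "\<lambda>P. i \<in> P" "Suc i"] by simp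

lemma prefix_determined_const: "prefix_determined W (\<lambda>k. c)"
  unfolding prefix_determined_def by auto

lemma prefix_determined_restrict:
  fixes W :: "'a \<Rightarrow> nat set" and m m' :: nat
  assumes "\<And>k k'. W k \<inter> {..<m} = W k' \<inter> {..<m} \<Longrightarrow> Q k = Q k'" "m \<le> m'"
    and "W k \<inter> {..<m'} = W k' \<inter> {..<m'}"
  shows "Q k = Q k'"
proof -
  have "W k \<inter> {..<m'} \<inter> {..<m} = W k' \<inter> {..<m'} \<inter> {..<m}"
    using assms(3) by simp
  moreover have "{..<m'} \<inter> {..<m} = {..<m}" using assms(2) by auto
  ultimately have "W k \<inter> {..<m} = W k' \<inter> {..<m}" by (simp add: Int_assoc)
  thus ?thesis by (rule assms(1))
qed

lemma prefix_determined_binop: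
  assumes "prefix_determined W Q" "prefix_determined W R"
  shows "prefix_determined W (\<lambda>k. f (Q k) (R k))"
proof -
  obtain m1 where m1: "\<And>k k'. W k \<inter> {..<m1} = W k' \<inter> {..<m1} \<Longrightarrow> Q k = Q k'"
    using assms(1) unfolding prefix_determined_def by blast
  obtain m2 where m2: "\<And>k k'. W k \<inter> {..<m2} = W k' \<inter> {..<m2} \<Longrightarrow> R k = R k'"
    using assms(2) unfolding prefix_determined_def by blast
  show ?thesis
    unfolding prefix_determined_def
  proof (intro exI allI impI)
    fix k k' assume same: "W k \<inter> {..<max m1 m2} = W k' \<inter> {..<max m1 m2}"
    have "Q k = Q k'"
      by (rule prefix_determined_restrict[where Q=Q, OF m1 max.cobounded1 same])
    moreover have "R k = R k'"
      by (rule prefix_determined_restrict[where Q=R, OF m2 max.cobounded2 same])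
    ultimately show "f (Q k) (R k) = f (Q k') (R k')" by simp
  qed
qed

lemma prefix_determined_conj:
  "prefix_determined W Q \<Longrightarrow> prefix_determined W R \<Longrightarrow> prefix_determined W (\<lambda>k. Q k \<and> R k)"
  by (rule prefix_determined_binop)

lemma prefix_determined_disj:
  "prefix_determined W Q \<Longrightarrow> prefix_determined W R \<Longrightarrow> prefix_determined W (\<lambda>k. Q k \<or> R k)"
  by (rule prefix_determined_binop)

lemma prefix_determined_not:
  "prefix_determined W Q \<Longrightarrow> prefix_determined W (\<lambda>k. \<not> Q k)"
  using prefix_determined_binop[of W Q Q "\<lambda>a b. \<not> a"] by simp

lemma prefix_determined_ex_le:
  "(\<And>j. prefix_determined W (Q j)) \<Longrightarrow> prefix_determined W (\<lambda>k. \<exists>j\<le>(K::nat). Q j k)"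
proof (induction K)
  case 0
  thus ?case by (simp cong: conj_cong)
next
  case (Suc K)
  have "(\<lambda>k. \<exists>j\<le>Suc K. Q j k) = (\<lambda>k. (\<exists>j\<le>K. Q j k) \<or> Q (Suc K) k)"
    unfolding le_Suc_eq by blast
  thus ?case using Suc by (simp add: prefix_determined_disj)
qed

lemma convergent_subseq_unit_cube:
  fixes X :: "nat \<Rightarrow> 'i::countable \<Rightarrow> real"
  assumes "\<And>n j. X n j \<in> {0..1}"
  shows "\<exists>r l. strict_mono r \<and> (\<forall>j. (\<lambda>n. X (r n) j) \<longlonglongrightarrow> l j)"
proof -
  let ?K = "PiE UNIV (\<lambda>_::'i. {0..1::real})"
  have "compactin (product_topology (\<lambda>_. euclidean) UNIV) ?K"
    by (subst compactin_PiE) auto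
  hence "seq_compact ?K"
    by (simp add: euclidean_product_topology compactin_euclidean_iff compact_imp_seq_compact)
  moreover have "\<forall>n. X n \<in> ?K" using assms by auto
  ultimately obtain l r where "strict_mono r" "(X \<circ> r) \<longlonglongrightarrow> l"
    unfolding seq_compact_def by metis
  moreover have "(\<lambda>n. X (r n) j) \<longlonglongrightarrow> l j" for j
  proof -
    have "continuous_on UNIV (\<lambda>x::'i \<Rightarrow> real. x j)" by simp
    from continuous_on_tendsto_compose[OF this \<open>(X \<circ> r) \<longlonglongrightarrow> l\<close>] show ?thesis
      by (simp add: o_def)
  qed
  ultimately show ?thesis by blast
qed

text \<open>There are only countably many prefix-determined events (one depending on the first \<open>m\<close>
  columns is a set of subsets of \<open>{..<m}\<close>), so by sequential compactness of \<open>[0,1]\<^sup>\<nat>\<close> a single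
  subsequence makes all their frequencies converge.\<close>

lemma prefix_determined_freq_convergent_subseq:
  fixes W :: "nat \<Rightarrow> nat set" and ks :: "nat \<Rightarrow> nat list"
  obtains r where "strict_mono r"
    "\<And>Q. prefix_determined W Q \<Longrightarrow> convergent (\<lambda>n. freq (ks (r n)) Q)"
proof -
  define X where
    "X n = (\<lambda>(m, c). freq (ks n) (\<lambda>k. set_encode (W k \<inter> {..<m}) \<in> set_decode c))" for n
  have unit: "X n j \<in> {0..1}" for n j
    unfolding X_def by (auto simp: freq_nonneg freq_le_1 split: prod.splits)
  obtain r l where r: "strict_mono r" and l: "\<And>j. (\<lambda>n. X (r n) j) \<longlonglongrightarrow> l j"
    using convergent_subseq_unit_cube[of X, OF unit] by blast
  have conv: "convergent (\<lambda>n. freq (ks (r n)) Q)" if Q: "prefix_determined W Q" for Q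
  proof -
    obtain m where m: "\<forall>k k'. W k \<inter> {..<m} = W k' \<inter> {..<m} \<longrightarrow> Q k = Q k'"
      using Q unfolding prefix_determined_def by blast
    define Z where "Z = {set_encode (W k \<inter> {..<m}) | k. Q k}"
    have "Z \<subseteq> set_encode ` Pow {..<m}" unfolding Z_def by auto
    hence "finite Z" by (rule finite_subset) auto
    hence decode: "set_decode (set_encode Z) = Z" by simp
    have event: "(set_encode (W k \<inter> {..<m}) \<in> set_decode (set_encode Z)) = Q k" for k
    proof
      assume "set_encode (W k \<inter> {..<m}) \<in> set_decode (set_encode Z)"
      then obtain k' where "Q k'" "set_encode (W k \<inter> {..<m}) = set_encode (W k' \<inter> {..<m})"
        unfolding decode unfolding Z_def by blast
      hence "W k \<inter> {..<m} = W k' \<inter> {..<m}" by (simp add: set_encode_eq)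
      thus "Q k" using m \<open>Q k'\<close> by blast
    next
      assume "Q k"
      thus "set_encode (W k \<inter> {..<m}) \<in> set_decode (set_encode Z)"
        unfolding decode unfolding Z_def by blast
    qed
    have "(\<lambda>n. freq (ks (r n)) Q) = (\<lambda>n. X (r n) (m, set_encode Z))"
      unfolding X_def by (simp only: event prod.case)
    thus ?thesis using l[of "(m, set_encode Z)"] unfolding convergent_def by auto
  qed
  from that[OF r conv] show ?thesis .
qed

lemma weighted_suminf_bounds:
  fixes q c :: "nat \<Rightarrow> real"
  assumes q: "\<And>i. 0 \<le> q i" "summable q" and c: "\<And>i. 0 \<le> c i" "\<And>i. c i \<le> 1"
  shows "summable (\<lambda>i. q i * c i)" "0 \<le> (\<Sum>i. q i * c i)" "(\<Sum>i. q i * c i) \<le> (\<Sum>i. q i)"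
proof -
  have nonneg: "0 \<le> q i * c i" and le: "q i * c i \<le> q i" for i
    using q(1)[of i] c[of i] by (auto intro: mult_left_le)
  show sum: "summable (\<lambda>i. q i * c i)"
    by (rule summable_comparison_test[OF _ q(2)]) (use nonneg le in auto)
  show "0 \<le> (\<Sum>i. q i * c i)" by (rule suminf_nonneg[OF sum nonneg])
  show "(\<Sum>i. q i * c i) \<le> (\<Sum>i. q i)" by (rule suminf_le[OF le sum q(2)])
qed

definition row_payoff :: "(nat \<Rightarrow> nat set) \<Rightarrow> (nat \<Rightarrow> real) \<Rightarrow> nat \<Rightarrow> real" where
  "row_payoff W q k = (\<Sum>i. q i * indicator (W k) i)"

definition col_payoff :: "(nat \<Rightarrow> nat set) \<Rightarrow> (nat \<Rightarrow> real) \<Rightarrow> nat \<Rightarrow> real" where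
  "col_payoff W p i = (\<Sum>k. p k * indicator (W k) i)"

definition prefix_limit_closed :: "(nat \<Rightarrow> nat set) \<Rightarrow> bool" where
  "prefix_limit_closed W \<longleftrightarrow> (\<forall>A. (\<forall>m. \<exists>k. A \<inter> {..<m} \<subseteq> W k) \<longrightarrow> (\<exists>k. A \<subseteq> W k))"

lemma row_payoff_bounds_sums:
  assumes q: "\<And>i. 0 \<le> q i" "q sums 1"
  shows "summable (\<lambda>i. q i * indicator (W k) i)" "0 \<le> row_payoff W q k" "row_payoff W q k \<le> 1"
proof -
  note bounds = weighted_suminf_bounds[OF q(1) sums_summable[OF q(2)]]
  show "summable (\<lambda>i. q i * indicator (W k) i)" by (rule bounds(1)) simp_all
  show "0 \<le> row_payoff W q k" unfolding row_payoff_def by (rule bounds(2)) simp_all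
  have "row_payoff W q k \<le> (\<Sum>i. q i)" unfolding row_payoff_def by (rule bounds(3)) simp_all
  thus "row_payoff W q k \<le> 1" using sums_unique[OF q(2)] by simp
qed

lemma col_payoff_bounds_sums:
  assumes p: "\<And>k. 0 \<le> p k" "p sums 1"
  shows "summable (\<lambda>k. p k * indicator (W k) i)" "0 \<le> col_payoff W p i" "col_payoff W p i \<le> 1"
proof -
  note bounds = weighted_suminf_bounds[OF p(1) sums_summable[OF p(2)]]
  show "summable (\<lambda>k. p k * indicator (W k) i)" by (rule bounds(1)) simp_all
  show "0 \<le> col_payoff W p i" unfolding col_payoff_def by (rule bounds(2)) simp_all
  have "col_payoff W p i \<le> (\<Sum>k. p k)" unfolding col_payoff_def by (rule bounds(3)) simp_all
  thus "col_payoff W p i \<le> 1" using sums_unique[OF p(2)] by simp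
qed

section \<open>The limit of the empirical strategies\<close>

locale frequency_limit =
  fixes W :: "nat \<Rightarrow> nat set" and ks :: "nat \<Rightarrow> nat list" and v :: real
  assumes closed: "prefix_limit_closed W"
    and nonempty: "\<And>n. ks n \<noteq> []"
    and convergent_freq: "\<And>Q. prefix_determined W Q \<Longrightarrow> convergent (\<lambda>n. freq (ks n) Q)"
    and guarantee: "\<And>n i. i < n \<Longrightarrow> v - inverse (real (Suc n)) \<le> freq (ks n) (\<lambda>k. i \<in> W k)"
begin

text \<open>\<open>\<mu>\<close> is a finitely additive probability on the algebra of prefix-determined events.\<close>

definition \<mu> :: "(nat \<Rightarrow> bool) \<Rightarrow> real" where
  "\<mu> Q = lim (\<lambda>n. freq (ks n) Q)"

lemma \<mu>_tendsto: "prefix_determined W Q \<Longrightarrow> (\<lambda>n. freq (ks n) Q) \<longlonglongrightarrow> \<mu> Q"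
  unfolding \<mu>_def by (simp add: convergent_freq convergent_LIMSEQ_iff[symmetric])

lemma \<mu>_nonneg: "prefix_determined W Q \<Longrightarrow> 0 \<le> \<mu> Q"
  by (rule LIMSEQ_le_const[OF \<mu>_tendsto]) (auto simp: freq_nonneg)

lemma \<mu>_le_1: "prefix_determined W Q \<Longrightarrow> \<mu> Q \<le> 1"
  by (rule LIMSEQ_le_const2[OF \<mu>_tendsto]) (auto simp: freq_le_1)

lemma \<mu>_mono:
  assumes "prefix_determined W Q" "prefix_determined W R" "\<And>k. Q k \<Longrightarrow> R k"
  shows "\<mu> Q \<le> \<mu> R"
  by (rule LIMSEQ_le[OF \<mu>_tendsto[OF assms(1)] \<mu>_tendsto[OF assms(2)]])
    (use freq_mono assms(3) in blast)

lemma \<mu>_const: "\<mu> (\<lambda>_. c) = (if c then 1 else 0)"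
proof -
  have "(\<lambda>n. freq (ks n) (\<lambda>_. c)) \<longlonglongrightarrow> (if c then 1 else 0)"
    using nonempty by (simp add: freq_const)
  with \<mu>_tendsto[OF prefix_determined_const] show ?thesis using LIMSEQ_unique by blast
qed

lemma \<mu>_disj_conj:
  assumes "prefix_determined W Q" "prefix_determined W R"
  shows "\<mu> (\<lambda>k. Q k \<or> R k) + \<mu> (\<lambda>k. Q k \<and> R k) = \<mu> Q + \<mu> R"
proof -
  have "(\<lambda>n. freq (ks n) (\<lambda>k. Q k \<or> R k) + freq (ks n) (\<lambda>k. Q k \<and> R k))
      \<longlonglongrightarrow> \<mu> (\<lambda>k. Q k \<or> R k) + \<mu> (\<lambda>k. Q k \<and> R k)"
    by (intro tendsto_add \<mu>_tendsto prefix_determined_conj prefix_determined_disj assms)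
  moreover have "(\<lambda>n. freq (ks n) Q + freq (ks n) R) \<longlonglongrightarrow> \<mu> Q + \<mu> R"
    by (intro tendsto_add \<mu>_tendsto assms)
  ultimately show ?thesis unfolding freq_disj_conj using LIMSEQ_unique by blast
qed

lemma \<mu>_disj_le:
  assumes "prefix_determined W Q" "prefix_determined W R"
  shows "\<mu> (\<lambda>k. Q k \<or> R k) \<le> \<mu> Q + \<mu> R"
  using \<mu>_disj_conj[OF assms] \<mu>_nonneg[OF prefix_determined_conj[OF assms]] by linarith

lemma \<mu>_disj_disjoint:
  assumes "prefix_determined W Q" "prefix_determined W R" "\<And>k. \<not> (Q k \<and> R k)"
  shows "\<mu> (\<lambda>k. Q k \<or> R k) = \<mu> Q + \<mu> R"
  using \<mu>_disj_conj[OF assms(1,2)] assms(3) by (simp add: \<mu>_const)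

lemma \<mu>_not:
  assumes "prefix_determined W Q"
  shows "\<mu> (\<lambda>k. \<not> Q k) = 1 - \<mu> Q"
  using \<mu>_disj_disjoint[OF assms prefix_determined_not[OF assms]] by (simp add: \<mu>_const)

lemma \<mu>_diff:
  assumes "prefix_determined W Q" "prefix_determined W R" "\<And>k. R k \<Longrightarrow> Q k"
  shows "\<mu> (\<lambda>k. Q k \<and> \<not> R k) = \<mu> Q - \<mu> R"
proof -
  have "\<mu> (\<lambda>k. R k \<or> (Q k \<and> \<not> R k)) = \<mu> R + \<mu> (\<lambda>k. Q k \<and> \<not> R k)"
    using assms by (intro \<mu>_disj_disjoint prefix_determined_conj prefix_determined_not) auto
  moreover have "(\<lambda>k. R k \<or> (Q k \<and> \<not> R k)) = Q" using assms(3) by auto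
  ultimately show ?thesis by simp
qed

lemma \<mu>_ex_le_sum:
  assumes "\<And>j. prefix_determined W (Q j)"
  shows "\<mu> (\<lambda>k. \<exists>j\<le>(K::nat). Q j k) \<le> (\<Sum>j\<le>K. \<mu> (Q j))"
proof (induction K)
  case (Suc K)
  have "(\<lambda>k. \<exists>j\<le>Suc K. Q j k) = (\<lambda>k. (\<exists>j\<le>K. Q j k) \<or> Q (Suc K) k)"
    unfolding le_Suc_eq by blast
  moreover have "\<mu> (\<lambda>k. (\<exists>j\<le>K. Q j k) \<or> Q (Suc K) k) \<le> \<mu> (\<lambda>k. \<exists>j\<le>K. Q j k) + \<mu> (Q (Suc K))"
    by (rule \<mu>_disj_le[OF prefix_determined_ex_le[OF assms] assms])
  ultimately show ?case using Suc.IH by simp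
qed (simp cong: conj_cong)

lemma \<mu>_pos_imp_ex:
  assumes "0 < \<mu> Q"
  shows "\<exists>k. Q k"
proof (rule ccontr)
  assume "\<nexists>k. Q k"
  hence "Q = (\<lambda>_. False)" by auto
  with assms show False by (simp add: \<mu>_const)
qed

lemma \<mu>_member_ge: "v \<le> \<mu> (\<lambda>k. i \<in> W k)"
proof (rule LIMSEQ_le[OF _ \<mu>_tendsto[OF prefix_determined_member]])
  show "(\<lambda>n. v - inverse (real (Suc n))) \<longlonglongrightarrow> v"
    using tendsto_diff[OF tendsto_const LIMSEQ_inverse_real_of_nat, of v] by simp
  show "\<exists>N. \<forall>n\<ge>N. v - inverse (real (Suc n)) \<le> freq (ks n) (\<lambda>k. i \<in> W k)"
    using guarantee by (intro exI[of _ "Suc i"]) auto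
qed

lemma \<mu>_next_column:
  assumes "prefix_determined W E"
  shows "\<mu> (\<lambda>k. W k \<inter> {..<m} = P \<and> E k)
    \<le> \<mu> (\<lambda>k. W k \<inter> {..<Suc m} = P \<and> E k) + \<mu> (\<lambda>k. W k \<inter> {..<Suc m} = insert m P \<and> E k)"
proof -
  have det: "prefix_determined W (\<lambda>k. W k \<inter> {..<m'} = P' \<and> E k)" for m' P'
    by (rule prefix_determined_conj[OF prefix_determined_prefix[of W "\<lambda>X. X = P'"] assms])
  have "\<mu> (\<lambda>k. W k \<inter> {..<m} = P \<and> E k)
      \<le> \<mu> (\<lambda>k. (W k \<inter> {..<Suc m} = P \<and> E k) \<or> (W k \<inter> {..<Suc m} = insert m P \<and> E k))"
    by (rule \<mu>_mono[OF det prefix_determined_disj[OF det det]])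
      (auto simp: Int_lessThan_Suc[of "W _"] split: if_splits)
  also have "\<dots> \<le> \<mu> (\<lambda>k. W k \<inter> {..<Suc m} = P \<and> E k) + \<mu> (\<lambda>k. W k \<inter> {..<Suc m} = insert m P \<and> E k)"
    by (rule \<mu>_disj_le[OF det det])
  finally show ?thesis .
qed

end

context frequency_limit
begin

definition cover :: "nat \<Rightarrow> nat \<Rightarrow> nat \<Rightarrow> bool" where
  "cover K m k' \<longleftrightarrow> (\<exists>k\<le>K. W k' \<inter> {..<m} \<subseteq> W k)"

lemma prefix_determined_cover: "prefix_determined W (cover K m)"
  using prefix_determined_prefix[of W "\<lambda>P. \<exists>k\<le>K. P \<subseteq> W k" m] unfolding cover_def .

lemma cover_antimono: "m \<le> m' \<Longrightarrow> cover K m' k \<Longrightarrow> cover K m k"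
  unfolding cover_def by (meson Int_mono order_refl lessThan_subset_iff subset_trans)

lemma cover_mono: "K \<le> K' \<Longrightarrow> cover K m k \<Longrightarrow> cover K' m k"
  unfolding cover_def by (meson order_trans)

definition cover_mass :: "nat \<Rightarrow> nat \<Rightarrow> real" where
  "cover_mass m K = \<mu> (cover K m)"

text \<open>\<open>cover_limit K\<close> is the mass of the rows whose winning set, on ever longer initial segments,
  is contained in that of one of the rows \<open>0, \<dots>, K\<close>; the limit strategy loses no mass exactly
  when it tends to \<open>1\<close>.\<close>

definition cover_limit :: "nat \<Rightarrow> real" where
  "cover_limit K = (INF m. cover_mass m K)"

lemma cover_mass_antimono: "m \<le> m' \<Longrightarrow> cover_mass m' K \<le> cover_mass m K"
  unfolding cover_mass_def by (rule \<mu>_mono[OF prefix_determined_cover prefix_determined_cover]) (rule cover_antimono)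

lemma cover_mass_mono: "K \<le> K' \<Longrightarrow> cover_mass m K \<le> cover_mass m K'"
  unfolding cover_mass_def by (rule \<mu>_mono[OF prefix_determined_cover prefix_determined_cover]) (rule cover_mono)

lemma cover_mass_nonneg: "0 \<le> cover_mass m K"
  unfolding cover_mass_def by (rule \<mu>_nonneg[OF prefix_determined_cover])

lemma cover_mass_tendsto: "(\<lambda>m. cover_mass m K) \<longlonglongrightarrow> cover_limit K"
  unfolding cover_limit_def
  by (rule LIMSEQ_decseq_INF) (auto simp: decseq_def cover_mass_antimono intro: bdd_belowI cover_mass_nonneg)

lemma cover_limit_le: "cover_limit K \<le> cover_mass m K"
  unfolding cover_limit_def by (rule cINF_lower) (auto intro: bdd_belowI cover_mass_nonneg)

lemma cover_limit_nonneg: "0 \<le> cover_limit K"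
  by (rule LIMSEQ_le_const[OF cover_mass_tendsto]) (simp add: cover_mass_nonneg)

lemma cover_limit_le_1: "cover_limit K \<le> 1"
  by (rule LIMSEQ_le_const2[OF cover_mass_tendsto])
    (simp add: cover_mass_def \<mu>_le_1[OF prefix_determined_cover])

lemma cover_limit_mono: "K \<le> K' \<Longrightarrow> cover_limit K \<le> cover_limit K'"
  by (rule LIMSEQ_le[OF cover_mass_tendsto cover_mass_tendsto]) (simp add: cover_mass_mono)

definition escape :: "(nat \<Rightarrow> nat) \<Rightarrow> nat \<Rightarrow> nat \<Rightarrow> bool" where
  "escape M K k' \<longleftrightarrow> (\<forall>j\<le>K. \<not> cover j (M j) k')"

lemma prefix_determined_escape: "prefix_determined W (escape M K)"
proof -
  have "escape M K = (\<lambda>k'. \<not> (\<exists>j\<le>K. cover j (M j) k'))"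
    unfolding escape_def by auto
  thus ?thesis
    by (simp only:) (intro prefix_determined_not prefix_determined_ex_le prefix_determined_cover)
qed

lemma escape_antimono: "K \<le> K' \<Longrightarrow> escape M K' k \<Longrightarrow> escape M K k"
  unfolding escape_def by auto

text \<open>This is where ascending-union closedness enters: rows escaping the covers at all depths
  would, by Koenig's lemma, have winning sets converging to a set that is covered by a single row.\<close>

lemma escape_null: "\<exists>K. \<mu> (escape M K) \<le> 0"
proof (rule ccontr)
  assume "\<nexists>K. \<mu> (escape M K) \<le> 0"
  hence pos: "0 < \<mu> (escape M K)" for K by (simp add: not_le)
  define good where "good m P \<longleftrightarrow> (\<forall>K. 0 < \<mu> (\<lambda>k. W k \<inter> {..<m} = P \<and> escape M K k))" for m P
  have det: "prefix_determined W (\<lambda>k. W k \<inter> {..<m} = P \<and> escape M K k)" for m P K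
    by (rule prefix_determined_conj[OF prefix_determined_prefix[of W "\<lambda>X. X = P"] prefix_determined_escape])
  have antimono: "\<mu> (\<lambda>k. W k \<inter> {..<m} = P \<and> escape M K' k) \<le> \<mu> (\<lambda>k. W k \<inter> {..<m} = P \<and> escape M K k)"
    if "K \<le> K'" for m P K K'
    by (rule \<mu>_mono[OF det det]) (use escape_antimono[OF that] in blast)
  have root: "good 0 {}" using pos unfolding good_def by simp
  have step: "good (Suc m) P \<or> good (Suc m) (insert m P)" if gm: "good m P" for m P
  proof (rule ccontr)
    assume "\<not> (good (Suc m) P \<or> good (Suc m) (insert m P))"
    then obtain K1 K2 where
      "\<mu> (\<lambda>k. W k \<inter> {..<Suc m} = P \<and> escape M K1 k) \<le> 0"
      "\<mu> (\<lambda>k. W k \<inter> {..<Suc m} = insert m P \<and> escape M K2 k) \<le> 0"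
      unfolding good_def by (auto simp: not_less)
    hence "\<mu> (\<lambda>k. W k \<inter> {..<Suc m} = P \<and> escape M (max K1 K2) k)
        + \<mu> (\<lambda>k. W k \<inter> {..<Suc m} = insert m P \<and> escape M (max K1 K2) k) \<le> 0"
      using antimono[of K1 "max K1 K2" "Suc m" P] antimono[of K2 "max K1 K2" "Suc m" "insert m P"]
      by simp
    moreover have "0 < \<mu> (\<lambda>k. W k \<inter> {..<m} = P \<and> escape M (max K1 K2) k)"
      using gm unfolding good_def by blast
    ultimately show False
      using \<mu>_next_column[OF prefix_determined_escape, of m P M "max K1 K2"] by linarith
  qed
  obtain A where A: "\<And>m. good m (A \<inter> {..<m})"
    using binary_tree_branch[of good, OF root step] by blast
  have row: "\<exists>k. W k \<inter> {..<m} = A \<inter> {..<m} \<and> escape M K k" for m K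
    using A[of m] \<mu>_pos_imp_ex[of "\<lambda>k. W k \<inter> {..<m} = A \<inter> {..<m} \<and> escape M K k"]
    unfolding good_def by blast
  hence "\<exists>k. A \<inter> {..<m} \<subseteq> W k" for m by blast
  then obtain k0 where "A \<subseteq> W k0"
    using closed unfolding prefix_limit_closed_def by blast
  moreover obtain k where "W k \<inter> {..<M k0} = A \<inter> {..<M k0}" "escape M k0 k"
    using row by blast
  ultimately show False unfolding escape_def cover_def by blast
qed

lemma escape_mass:
  assumes "0 < \<epsilon>" and small: "\<And>K. cover_limit K \<le> 1 - \<epsilon>"
    and M: "\<And>j. cover_mass (M j) j \<le> cover_limit j + \<epsilon> / 4 * (1/2) ^ j"
  shows "\<epsilon> / 4 \<le> \<mu> (escape M K)"
proof -
  define N where "N = (\<Sum>j\<le>K. M j)"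
  have MN: "M j \<le> N" if "j \<le> K" for j
    unfolding N_def by (rule member_le_sum) (use that in auto)
  define E where "E j k \<longleftrightarrow> cover j (M j) k \<and> \<not> cover j N k" for j k
  have detE: "prefix_determined W (E j)" for j
    unfolding E_def by (intro prefix_determined_conj prefix_determined_not prefix_determined_cover)
  have E_mass: "\<mu> (E j) \<le> \<epsilon> / 4 * (1/2) ^ j" if "j \<le> K" for j
  proof -
    have "\<mu> (E j) = cover_mass (M j) j - cover_mass N j"
      unfolding E_def cover_mass_def
      by (rule \<mu>_diff[OF prefix_determined_cover prefix_determined_cover])
        (rule cover_antimono[OF MN[OF that]])
    thus ?thesis using M[of j] cover_limit_le[of j N] by linarith
  qed
  have "(\<Sum>j\<le>K. (1/2::real) ^ j) = 2 - (1/2) ^ K"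
    by (induction K) auto
  hence geometric: "(\<Sum>j\<le>K. (1/2::real) ^ j) \<le> 2" by simp
  have "\<not> cover K N k \<Longrightarrow> escape M K k \<or> (\<exists>j\<le>K. E j k)" for k
    unfolding escape_def E_def using cover_mono by blast
  hence "\<mu> (\<lambda>k. \<not> cover K N k) \<le> \<mu> (\<lambda>k. escape M K k \<or> (\<exists>j\<le>K. E j k))"
    by (intro \<mu>_mono prefix_determined_not prefix_determined_cover prefix_determined_disj
        prefix_determined_escape prefix_determined_ex_le detE)
  also have "\<dots> \<le> \<mu> (escape M K) + (\<Sum>j\<le>K. \<mu> (E j))"
    using \<mu>_disj_le[OF prefix_determined_escape[of M K] prefix_determined_ex_le[where Q=E and K=K, OF detE]]
      \<mu>_ex_le_sum[where Q=E and K=K, OF detE] by simp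
  also have "(\<Sum>j\<le>K. \<mu> (E j)) \<le> (\<Sum>j\<le>K. \<epsilon> / 4 * (1/2) ^ j)"
    by (intro sum_mono E_mass) simp
  also have "\<dots> = \<epsilon> / 4 * (\<Sum>j\<le>K. (1/2) ^ j)"
    by (simp add: sum_distrib_left)
  also have "\<dots> \<le> \<epsilon> / 2"
    using geometric \<open>0 < \<epsilon>\<close> by simp
  finally have "\<mu> (\<lambda>k. \<not> cover K N k) \<le> \<mu> (escape M K) + \<epsilon> / 2" by simp
  moreover have "\<mu> (\<lambda>k. \<not> cover K N k) = 1 - cover_mass N K"
    unfolding cover_mass_def by (rule \<mu>_not[OF prefix_determined_cover])
  moreover have "cover_mass N K \<le> cover_mass (M K) K"
    by (rule cover_mass_antimono[OF MN]) simp
  moreover have "\<epsilon> / 4 * (1/2) ^ K \<le> \<epsilon> / 4"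
    using \<open>0 < \<epsilon>\<close> by (simp add: power_le_one)
  ultimately show ?thesis using M[of K] small[of K] by linarith
qed

lemma cover_limit_tendsto_1: "cover_limit \<longlonglongrightarrow> 1"
proof (rule LIMSEQ_I)
  fix \<epsilon> :: real assume "0 < \<epsilon>"
  have "\<exists>K. 1 - \<epsilon> < cover_limit K"
  proof (rule ccontr)
    assume "\<nexists>K. 1 - \<epsilon> < cover_limit K"
    hence small: "cover_limit K \<le> 1 - \<epsilon>" for K by (simp add: not_less)
    have "\<exists>m. cover_mass m j \<le> cover_limit j + \<epsilon> / 4 * (1/2) ^ j" for j
    proof -
      have "cover_limit j < cover_limit j + \<epsilon> / 4 * (1/2) ^ j" using \<open>0 < \<epsilon>\<close> by simp
      from order_tendstoD(2)[OF cover_mass_tendsto this] obtain m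
        where "cover_mass m j < cover_limit j + \<epsilon> / 4 * (1/2) ^ j"
        unfolding eventually_sequentially by blast
      thus ?thesis by (blast intro: less_imp_le)
    qed
    then obtain M where "\<And>j. cover_mass (M j) j \<le> cover_limit j + \<epsilon> / 4 * (1/2) ^ j"
      by metis
    from escape_mass[OF \<open>0 < \<epsilon>\<close> small this] escape_null[of M] \<open>0 < \<epsilon>\<close> show False
      by (meson divide_pos_pos order.trans linorder_not_le zero_less_numeral)
  qed
  then obtain K where K: "1 - \<epsilon> < cover_limit K" ..
  have "norm (cover_limit n - 1) < \<epsilon>" if "K \<le> n" for n
    using cover_limit_mono[OF that] cover_limit_le_1[of n] K by simp
  thus "\<exists>N. \<forall>n\<ge>N. norm (cover_limit n - 1) < \<epsilon>" by blast
qed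

end
context frequency_limit
begin

text \<open>The limit strategy gives row \<open>k\<close> the mass of the rows first covered by row \<open>k\<close>;
  \<open>weight_at m\<close> is its approximation at depth \<open>m\<close>.\<close>

definition weight_at :: "nat \<Rightarrow> nat \<Rightarrow> real" where
  "weight_at m k = (case k of 0 \<Rightarrow> cover_mass m 0 | Suc j \<Rightarrow> cover_mass m (Suc j) - cover_mass m j)"

definition weight :: "nat \<Rightarrow> real" where
  "weight k = (case k of 0 \<Rightarrow> cover_limit 0 | Suc j \<Rightarrow> cover_limit (Suc j) - cover_limit j)"

lemma weight_nonneg: "0 \<le> weight k"
  by (cases k) (simp_all add: weight_def cover_limit_nonneg cover_limit_mono)

lemma weight_sums_1: "weight sums 1"
proof -
  have "(\<Sum>k<Suc K. weight k) = cover_limit K" for K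
    by (induction K) (auto simp: weight_def)
  hence "(\<lambda>n. \<Sum>k<Suc n. weight k) \<longlonglongrightarrow> 1"
    using cover_limit_tendsto_1 by simp
  thus ?thesis unfolding sums_def by (rule LIMSEQ_imp_Suc)
qed

lemma weight_at_tendsto: "(\<lambda>m. weight_at m k) \<longlonglongrightarrow> weight k"
  by (cases k) (simp_all add: weight_at_def weight_def cover_mass_tendsto tendsto_diff)

lemma first_cover_member_le_weight_at:
  assumes "i < m"
  shows "\<mu> (\<lambda>k'. (cover (Suc K) m k' \<and> \<not> cover K m k') \<and> i \<in> W k')
    \<le> weight_at m (Suc K) * indicator (W (Suc K)) i"
proof (cases "i \<in> W (Suc K)")
  case True
  have "\<mu> (\<lambda>k'. (cover (Suc K) m k' \<and> \<not> cover K m k') \<and> i \<in> W k')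
      \<le> \<mu> (\<lambda>k'. cover (Suc K) m k' \<and> \<not> cover K m k')"
    by (intro \<mu>_mono prefix_determined_conj prefix_determined_not prefix_determined_cover
        prefix_determined_member) simp
  also have "\<dots> = cover_mass m (Suc K) - cover_mass m K"
    unfolding cover_mass_def
    by (rule \<mu>_diff[OF prefix_determined_cover prefix_determined_cover])
      (rule cover_mono[of K "Suc K"], simp)
  finally show ?thesis using True by (simp add: weight_at_def)
next
  case False
  have "\<not> ((cover (Suc K) m k' \<and> \<not> cover K m k') \<and> i \<in> W k')" for k'
  proof
    assume "(cover (Suc K) m k' \<and> \<not> cover K m k') \<and> i \<in> W k'"
    then obtain k where "k \<le> Suc K" "\<not> k \<le> K" "W k' \<inter> {..<m} \<subseteq> W k" "i \<in> W k'"
      unfolding cover_def by blast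
    moreover from \<open>k \<le> Suc K\<close> \<open>\<not> k \<le> K\<close> have "k = Suc K" by simp
    ultimately show False using False assms by blast
  qed
  hence "(\<lambda>k'. (cover (Suc K) m k' \<and> \<not> cover K m k') \<and> i \<in> W k') = (\<lambda>_. False)" by auto
  thus ?thesis using False by (simp add: \<mu>_const)
qed

lemma cover_member_le_weight_at:
  assumes "i < m"
  shows "\<mu> (\<lambda>k'. cover K m k' \<and> i \<in> W k') \<le> (\<Sum>k\<le>K. weight_at m k * indicator (W k) i)"
proof (induction K)
  case 0
  have "\<mu> (\<lambda>k'. cover 0 m k' \<and> i \<in> W k') \<le> \<mu> (cover 0 m)"
    by (rule \<mu>_mono[OF prefix_determined_conj[OF prefix_determined_cover prefix_determined_member]
          prefix_determined_cover]) simp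
  moreover have "(\<lambda>k'. cover 0 m k' \<and> i \<in> W k') = (\<lambda>_. False)" if "i \<notin> W 0"
    using that assms unfolding cover_def by auto
  ultimately show ?case
    by (cases "i \<in> W 0") (simp_all add: weight_at_def cover_mass_def \<mu>_const)
next
  case (Suc K)
  have "(\<lambda>k'. cover (Suc K) m k' \<and> i \<in> W k')
      = (\<lambda>k'. (cover K m k' \<and> i \<in> W k') \<or> ((cover (Suc K) m k' \<and> \<not> cover K m k') \<and> i \<in> W k'))"
    using cover_mono[of K "Suc K" m] by auto
  hence "\<mu> (\<lambda>k'. cover (Suc K) m k' \<and> i \<in> W k')
      = \<mu> (\<lambda>k'. cover K m k' \<and> i \<in> W k') + \<mu> (\<lambda>k'. (cover (Suc K) m k' \<and> \<not> cover K m k') \<and> i \<in> W k')"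
    by (simp only:) (intro \<mu>_disj_disjoint prefix_determined_conj prefix_determined_not
        prefix_determined_cover prefix_determined_member, auto)
  with Suc.IH first_cover_member_le_weight_at[OF assms, of K] show ?case by simp
qed

lemma weight_at_member_ge:
  assumes "i < m"
  shows "v - 1 + cover_mass m K \<le> (\<Sum>k\<le>K. weight_at m k * indicator (W k) i)"
proof -
  have detC: "prefix_determined W (\<lambda>k'. cover K m k' \<and> i \<in> W k')"
    by (rule prefix_determined_conj[OF prefix_determined_cover prefix_determined_member])
  have "\<mu> (\<lambda>k. i \<in> W k) \<le> \<mu> (\<lambda>k'. (cover K m k' \<and> i \<in> W k') \<or> \<not> cover K m k')"
    by (rule \<mu>_mono[OF prefix_determined_member prefix_determined_disj[OF detC
          prefix_determined_not[OF prefix_determined_cover]]]) auto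
  also have "\<dots> \<le> \<mu> (\<lambda>k'. cover K m k' \<and> i \<in> W k') + \<mu> (\<lambda>k'. \<not> cover K m k')"
    by (rule \<mu>_disj_le[OF detC prefix_determined_not[OF prefix_determined_cover]])
  also have "\<mu> (\<lambda>k'. \<not> cover K m k') = 1 - cover_mass m K"
    unfolding cover_mass_def by (rule \<mu>_not[OF prefix_determined_cover])
  finally show ?thesis
    using \<mu>_member_ge[of i] cover_member_le_weight_at[OF assms, of K] by linarith
qed

lemma col_payoff_weight_ge: "v \<le> col_payoff W weight i"
proof -
  note bounds = weighted_suminf_bounds[OF weight_nonneg sums_summable[OF weight_sums_1]
      indicator_pos_le indicator_le_1]
  have partial: "v - 1 + cover_limit K \<le> (\<Sum>k\<le>K. weight k * indicator (W k) i)" for K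
  proof (rule LIMSEQ_le)
    show "(\<lambda>m. v - 1 + cover_mass m K) \<longlonglongrightarrow> v - 1 + cover_limit K"
      by (intro tendsto_add tendsto_const cover_mass_tendsto)
    show "(\<lambda>m. \<Sum>k\<le>K. weight_at m k * indicator (W k) i) \<longlonglongrightarrow> (\<Sum>k\<le>K. weight k * indicator (W k) i)"
      by (intro tendsto_sum tendsto_mult_right weight_at_tendsto)
    show "\<exists>N. \<forall>m\<ge>N. v - 1 + cover_mass m K \<le> (\<Sum>k\<le>K. weight_at m k * indicator (W k) i)"
      using weight_at_member_ge by (intro exI[of _ "Suc i"]) simp
  qed
  have "(\<Sum>k\<le>K. weight k * indicator (W k) i) \<le> col_payoff W weight i" for K
    unfolding col_payoff_def
    by (rule sum_le_suminf[OF bounds(1)]) (auto intro: mult_nonneg_nonneg weight_nonneg)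
  with partial have "v - 1 + cover_limit K \<le> col_payoff W weight i" for K
    by (meson order_trans)
  moreover have "(\<lambda>K. v - 1 + cover_limit K) \<longlonglongrightarrow> v - 1 + 1"
    by (intro tendsto_add tendsto_const cover_limit_tendsto_1)
  ultimately have "v - 1 + 1 \<le> col_payoff W weight i"
    by (intro LIMSEQ_le_const2) auto
  thus ?thesis by simp
qed

end

section \<open>Pure best replies\<close>

lemma row_payoff_le_tail:
  assumes q: "\<And>i. 0 \<le> q i" "summable q" and prefix: "W k \<inter> {..<m} \<subseteq> W k'"
  shows "row_payoff W q k \<le> row_payoff W q k' + (\<Sum>j. q (j + m))"
proof -
  note bounds = weighted_suminf_bounds[OF q indicator_pos_le indicator_le_1]
  have "row_payoff W q k = (\<Sum>j. q (j + m) * indicator (W k) (j + m)) + (\<Sum>i<m. q i * indicator (W k) i)"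
    unfolding row_payoff_def by (rule suminf_split_initial_segment[OF bounds(1)])
  also have "(\<Sum>j. q (j + m) * indicator (W k) (j + m)) \<le> (\<Sum>j. q (j + m))"
    by (rule weighted_suminf_bounds(3)) (simp_all add: q summable_ignore_initial_segment)
  also have "(\<Sum>i<m. q i * indicator (W k) i) \<le> (\<Sum>i<m. q i * indicator (W k') i)"
    by (rule sum_mono) (use prefix q(1) in \<open>auto split: split_indicator\<close>)
  also have "\<dots> \<le> row_payoff W q k'"
    unfolding row_payoff_def by (rule sum_le_suminf[OF bounds(1)]) (simp_all add: q(1))
  finally show ?thesis by simp
qed

lemma near_sup_branch:
  fixes u :: "nat \<Rightarrow> real" and W :: "nat \<Rightarrow> nat set"
  assumes bdd: "bdd_above (range u)"
  obtains A where "\<And>m e. 0 < e \<Longrightarrow> \<exists>k. W k \<inter> {..<m} = A \<inter> {..<m} \<and> (SUP k. u k) - e < u k"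
proof -
  define V where "V = (SUP k. u k)"
  define good where "good m P \<longleftrightarrow> (\<forall>e>0. \<exists>k. W k \<inter> {..<m} = P \<and> V - e < u k)" for m P
  have root: "good 0 {}"
    unfolding good_def
  proof (intro allI impI)
    fix e :: real assume "0 < e"
    hence "V - e < (SUP k. u k)" unfolding V_def by simp
    then obtain k where "V - e < u k" using less_cSUP_iff[OF _ bdd] by blast
    thus "\<exists>k. W k \<inter> {..<0} = {} \<and> V - e < u k" by auto
  qed
  have step: "good (Suc m) P \<or> good (Suc m) (insert m P)" if gm: "good m P" for m P
  proof (rule ccontr)
    assume "\<not> (good (Suc m) P \<or> good (Suc m) (insert m P))"
    then obtain e1 e2 where "0 < e1" "0 < e2"
      and e1: "\<forall>k. W k \<inter> {..<Suc m} = P \<longrightarrow> \<not> V - e1 < u k"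
      and e2: "\<forall>k. W k \<inter> {..<Suc m} = insert m P \<longrightarrow> \<not> V - e2 < u k"
      unfolding good_def by blast
    hence "0 < min e1 e2" by simp
    then obtain k where k: "W k \<inter> {..<m} = P" "V - min e1 e2 < u k"
      using gm unfolding good_def by blast
    hence "W k \<inter> {..<Suc m} = P \<or> W k \<inter> {..<Suc m} = insert m P"
      using Int_lessThan_Suc[of "W k" m] by simp
    thus False
    proof
      assume "W k \<inter> {..<Suc m} = P"
      with e1 have "\<not> V - e1 < u k" by blast
      with k(2) min.cobounded1[of e1 e2] show False by linarith
    next
      assume "W k \<inter> {..<Suc m} = insert m P"
      with e2 have "\<not> V - e2 < u k" by blast
      with k(2) min.cobounded2[of e1 e2] show False by linarith
    qed
  qed
  obtain A where A: "\<And>m. good m (A \<inter> {..<m})"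
    using binary_tree_branch[of good, OF root step] by blast
  show ?thesis
  proof (rule that)
    fix m and e :: real assume "0 < e"
    thus "\<exists>k. W k \<inter> {..<m} = A \<inter> {..<m} \<and> (SUP k. u k) - e < u k"
      using A[of m] unfolding good_def V_def by blast
  qed
qed

lemma best_response_exists:
  assumes closed: "prefix_limit_closed W" and q: "\<And>i. 0 \<le> q i" "summable q"
  obtains k where "\<And>k'. row_payoff W q k' \<le> row_payoff W q k"
proof -
  let ?u = "row_payoff W q"
  have "?u k \<le> (\<Sum>i. q i)" for k
    unfolding row_payoff_def by (rule weighted_suminf_bounds(3)[OF q]) simp_all
  hence bdd: "bdd_above (range ?u)" by (intro bdd_aboveI) auto
  define V where "V = (SUP k. ?u k)"
  obtain A where A: "\<And>m e. 0 < e \<Longrightarrow> \<exists>k. W k \<inter> {..<m} = A \<inter> {..<m} \<and> V - e < ?u k"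
    unfolding V_def using near_sup_branch[OF bdd] by blast
  have "\<exists>k. A \<inter> {..<m} \<subseteq> W k" for m
    using A[of 1 m] by auto
  then obtain k0 where k0: "A \<subseteq> W k0"
    using closed unfolding prefix_limit_closed_def by blast
  have approx: "V - e < ?u k0 + (\<Sum>j. q (j + m))" if e: "0 < e" for e m
  proof -
    obtain k where k: "W k \<inter> {..<m} = A \<inter> {..<m}" "V - e < ?u k"
      using A[OF e] by blast
    hence "W k \<inter> {..<m} \<subseteq> W k0" using k0 by blast
    from row_payoff_le_tail[OF q this] k(2) show ?thesis by linarith
  qed
  have "V \<le> ?u k0"
  proof (rule ccontr)
    assume "\<not> V \<le> ?u k0"
    hence e: "0 < (V - ?u k0) / 2" by simp
    then obtain m where "norm (\<Sum>j. q (j + m)) < (V - ?u k0) / 2"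
      using suminf_exist_split[OF e q(2)] by blast
    hence "(\<Sum>j. q (j + m)) < (V - ?u k0) / 2" by simp
    with approx[OF e, of m] show False by argo
  qed
  moreover have "?u k' \<le> V" for k'
    unfolding V_def by (rule cSUP_upper[OF _ bdd]) simp
  ultimately show ?thesis by (intro that) (rule order_trans)
qed

section \<open>The finite minimax theorem by multiplicative weights\<close>

text \<open>Each round plays a best reply to the weights \<open>(1 - \<epsilon>) ^ (number of earlier wins against
  column i)\<close>, which shrinks their total by at least the factor \<open>1 - \<epsilon> * v\<close>.\<close>

lemma multiplicative_weights:
  fixes W :: "nat \<Rightarrow> nat set" and v \<epsilon> :: real and n R :: nat
  assumes resp: "\<And>w. (\<And>i. 0 < w i) \<Longrightarrow> \<exists>k. v * (\<Sum>i<n. w i) \<le> (\<Sum>i<n. w i * indicator (W k) i)"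
    and \<epsilon>: "0 < \<epsilon>" "\<epsilon> < 1" "\<epsilon> * v \<le> 1"
  obtains ks where "length ks = R"
    "\<And>i. i < n \<Longrightarrow> (1 - \<epsilon>) ^ length (filter (\<lambda>k. i \<in> W k) ks) \<le> (1 - \<epsilon> * v) ^ R * n"
proof -
  define w where "w ks i = (1 - \<epsilon>) ^ length (filter (\<lambda>k. i \<in> W k) ks)" for ks i
  define \<Phi> where "\<Phi> ks = (\<Sum>i<n. w ks i)" for ks
  have w_pos: "0 < w ks i" for ks i
    unfolding w_def using \<epsilon> by simp
  have "\<exists>k. v * \<Phi> ks \<le> (\<Sum>i<n. w ks i * indicator (W k) i)" for ks
    unfolding \<Phi>_def by (rule resp) (rule w_pos)
  hence "\<forall>ks. \<exists>k. v * \<Phi> ks \<le> (\<Sum>i<n. w ks i * indicator (W k) i)" ..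
  from choice[OF this] obtain br
    where br: "\<forall>ks. v * \<Phi> ks \<le> (\<Sum>i<n. w ks i * indicator (W (br ks)) i)" ..
  have w_snoc: "w (ks @ [k]) i = w ks i - \<epsilon> * (w ks i * indicator (W k) i)" for ks k i
    unfolding w_def by (simp add: algebra_simps split: split_indicator)
  have \<Phi>_step: "\<Phi> (ks @ [br ks]) \<le> (1 - \<epsilon> * v) * \<Phi> ks" for ks
  proof -
    have "\<Phi> (ks @ [br ks]) = \<Phi> ks - \<epsilon> * (\<Sum>i<n. w ks i * indicator (W (br ks)) i)"
      unfolding \<Phi>_def w_snoc by (simp only: sum_subtractf sum_distrib_left)
    also have "\<dots> \<le> \<Phi> ks - \<epsilon> * (v * \<Phi> ks)"
      using mult_left_mono[OF spec[OF br, of ks], of \<epsilon>] \<epsilon>(1) by linarith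
    finally show ?thesis by (simp add: algebra_simps)
  qed
  define play where "play R = ((\<lambda>ks. ks @ [br ks]) ^^ R) []" for R
  have "length (play R) = R \<and> \<Phi> (play R) \<le> (1 - \<epsilon> * v) ^ R * n"
  proof (induction R)
    case 0
    show ?case by (simp add: play_def \<Phi>_def w_def)
  next
    case (Suc R)
    have "\<Phi> (play (Suc R)) \<le> (1 - \<epsilon> * v) * \<Phi> (play R)"
      unfolding play_def using \<Phi>_step by simp
    also have "\<dots> \<le> (1 - \<epsilon> * v) * ((1 - \<epsilon> * v) ^ R * n)"
      using Suc.IH \<epsilon>(3) by (intro mult_left_mono) auto
    finally show ?case using Suc.IH by (simp add: play_def)
  qed
  moreover have "w (play R) i \<le> \<Phi> (play R)" if "i < n" for i
    unfolding \<Phi>_def using that w_pos by (intro member_le_sum) (auto intro: less_imp_le)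
  ultimately show ?thesis
    using that[of "play R"] unfolding w_def by (meson order_trans)
qed

lemma multiplicative_weights_count_bound:
  fixes \<epsilon> v :: real and c n R :: nat
  assumes \<epsilon>: "0 < \<epsilon>" "4 * \<epsilon> < v" and "v \<le> 1" "0 < n" and R: "ln n \<le> 2 * R * \<epsilon>\<^sup>2"
    and potential: "(1 - \<epsilon>) ^ c \<le> (1 - \<epsilon> * v) ^ R * n"
  shows "R * (v - 4 * \<epsilon>) \<le> c"
proof -
  have \<epsilon>_half: "\<epsilon> \<le> 1/2" using \<epsilon> \<open>v \<le> 1\<close> by linarith
  have \<epsilon>v_le: "\<epsilon> * v \<le> \<epsilon>" using \<epsilon>(1) \<open>v \<le> 1\<close> by (simp add: mult_left_le)
  hence \<epsilon>v: "\<epsilon> * v < 1" using \<epsilon>_half by simp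
  have "c * ln (1 - \<epsilon>) \<le> R * ln (1 - \<epsilon> * v) + ln n"
    using ln_mono[OF potential] \<epsilon> \<epsilon>v \<epsilon>_half \<open>0 < n\<close> by (simp add: ln_mult ln_realpow)
  moreover have "c * (- \<epsilon> - 2 * \<epsilon>\<^sup>2) \<le> c * ln (1 - \<epsilon>)"
    using ln_one_minus_pos_lower_bound[of \<epsilon>] \<epsilon> \<epsilon>_half by (intro mult_left_mono) auto
  moreover have "R * ln (1 - \<epsilon> * v) \<le> R * (- (\<epsilon> * v))"
    using ln_le_minus_one[of "1 - \<epsilon> * v"] \<epsilon>v by (intro mult_left_mono) auto
  ultimately have "\<epsilon> * (R * (v - 2 * \<epsilon>)) \<le> \<epsilon> * (c * (1 + 2 * \<epsilon>))"
    using R by (simp add: algebra_simps power2_eq_square)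
  hence upper: "R * (v - 2 * \<epsilon>) \<le> c * (1 + 2 * \<epsilon>)"
    using \<epsilon>(1) by simp
  have "(v - 4 * \<epsilon>) * (1 + 2 * \<epsilon>) = v - 2 * \<epsilon> - 2 * (\<epsilon> - \<epsilon> * v) - 8 * \<epsilon>\<^sup>2"
    by (simp add: algebra_simps power2_eq_square)
  also have "\<dots> \<le> v - 2 * \<epsilon>"
    using \<epsilon>v_le zero_le_power2[of \<epsilon>] by argo
  finally have "(v - 4 * \<epsilon>) * (1 + 2 * \<epsilon>) \<le> v - 2 * \<epsilon>" .
  hence "R * ((v - 4 * \<epsilon>) * (1 + 2 * \<epsilon>)) \<le> R * (v - 2 * \<epsilon>)"
    by (rule mult_left_mono) simp
  hence "R * (v - 4 * \<epsilon>) * (1 + 2 * \<epsilon>) \<le> c * (1 + 2 * \<epsilon>)"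
    using upper by (simp add: mult.assoc)
  thus ?thesis using \<epsilon>(1) by simp
qed

lemma scaled_response:
  fixes W :: "nat \<Rightarrow> nat set" and w :: "nat \<Rightarrow> real" and n :: nat
  assumes resp: "\<And>q. (\<And>i. 0 \<le> q i) \<Longrightarrow> (\<Sum>i<n. q i) = 1 \<Longrightarrow> \<exists>k. v \<le> (\<Sum>i<n. q i * indicator (W k) i)"
    and w: "\<And>i. 0 < w i" and "0 < n"
  shows "\<exists>k. v * (\<Sum>i<n. w i) \<le> (\<Sum>i<n. w i * indicator (W k) i)"
proof -
  define total where "total = (\<Sum>i<n. w i)"
  have "0 < total" unfolding total_def using w \<open>0 < n\<close> by (intro sum_pos) auto
  have "(\<Sum>i<n. w i / total) = 1"
    using \<open>0 < total\<close> unfolding total_def sum_divide_distrib[symmetric] by simp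
  moreover have "0 \<le> w i / total" for i using w[of i] \<open>0 < total\<close> by simp
  ultimately obtain k where "v \<le> (\<Sum>i<n. w i / total * indicator (W k) i)"
    using resp[of "\<lambda>i. w i / total"] by blast
  also have "(\<Sum>i<n. w i / total * indicator (W k) i) = (\<Sum>i<n. w i * indicator (W k) i) / total"
    unfolding sum_divide_distrib by (rule sum.cong) simp_all
  finally have "v * total \<le> (\<Sum>i<n. w i * indicator (W k) i)"
    by (simp only: pos_le_divide_eq[OF \<open>0 < total\<close>])
  thus ?thesis unfolding total_def by blast
qed

lemma finite_game_approx_strategy:
  fixes W :: "nat \<Rightarrow> nat set"
  assumes resp: "\<And>q. (\<And>i. 0 \<le> q i) \<Longrightarrow> (\<Sum>i<n. q i) = 1 \<Longrightarrow> \<exists>k. v \<le> (\<Sum>i<n. q i * indicator (W k) i)"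
    and "0 < \<delta>"
  obtains ks where "ks \<noteq> []" "\<And>i. i < n \<Longrightarrow> v - \<delta> \<le> freq ks (\<lambda>k. i \<in> W k)"
proof (cases "n = 0 \<or> v \<le> \<delta>")
  case True
  show ?thesis
  proof (rule that[of "[0]"])
    fix i assume "i < n"
    with True have "v - \<delta> \<le> 0" by auto
    thus "v - \<delta> \<le> freq [0] (\<lambda>k. i \<in> W k)" using freq_nonneg by (rule order_trans)
  qed simp
next
  case False
  hence "0 < n" "\<delta> < v" by auto
  note resp' = scaled_response[OF resp _ \<open>0 < n\<close>]
  have "v \<le> 1"
  proof -
    obtain k where "v * (\<Sum>i<n. 1) \<le> (\<Sum>i<n. 1 * indicator (W k) i)"
      using resp'[of "\<lambda>_. 1"] by auto
    moreover have "(\<Sum>i<n. 1 * indicator (W k) i) \<le> (\<Sum>i<n. 1::real)"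
      by (rule sum_mono) simp
    ultimately have "v * n \<le> n" by simp
    thus ?thesis using \<open>0 < n\<close> by simp
  qed
  define \<epsilon> where "\<epsilon> = \<delta> / 4"
  define R where "R = nat \<lceil>ln n / (2 * \<epsilon>\<^sup>2)\<rceil> + 1"
  have "\<delta> * v \<le> 1"
    using \<open>0 < \<delta>\<close> \<open>\<delta> < v\<close> \<open>v \<le> 1\<close> by (intro mult_le_one) auto
  hence \<epsilon>: "0 < \<epsilon>" "\<epsilon> < 1" "\<epsilon> * v \<le> 1" "4 * \<epsilon> < v"
    using \<open>0 < \<delta>\<close> \<open>\<delta> < v\<close> \<open>v \<le> 1\<close> unfolding \<epsilon>_def by auto
  have "ln n / (2 * \<epsilon>\<^sup>2) \<le> R" unfolding R_def by linarith
  hence R_bound: "ln n \<le> 2 * R * \<epsilon>\<^sup>2" using \<epsilon>(1) by (simp add: divide_le_eq mult_ac)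
  obtain ks where ks: "length ks = R"
    "\<And>i. i < n \<Longrightarrow> (1 - \<epsilon>) ^ length (filter (\<lambda>k. i \<in> W k) ks) \<le> (1 - \<epsilon> * v) ^ R * n"
    using multiplicative_weights[OF resp' \<epsilon>(1-3)] by blast
  have "v - \<delta> \<le> freq ks (\<lambda>k. i \<in> W k)" if "i < n" for i
    using multiplicative_weights_count_bound[OF \<epsilon>(1,4) \<open>v \<le> 1\<close> \<open>0 < n\<close> R_bound ks(2)[OF that]] ks(1)
    unfolding freq_def R_def \<epsilon>_def by (simp add: le_divide_eq algebra_simps)
  moreover have "ks \<noteq> []" using ks(1) unfolding R_def by auto
  ultimately show ?thesis using that by blast
qed

section \<open>Mixed strategies of a countable game\<close>

lemma ascending_union_closed_image:
  fixes g :: "nat \<Rightarrow> 'b" and F :: "'b set set"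
  assumes closed: "ascending_union_closed F" and "inj g" and prefixes: "\<And>m. g ` (A \<inter> {..<m}) \<in> F"
  shows "g ` A \<in> F"
proof (cases "finite A")
  case True
  then obtain m where "A \<subseteq> {..<m}" using finite_nat_bounded by blast
  hence "A \<inter> {..<m} = A" by blast
  thus ?thesis using prefixes[of m] by simp
next
  case False
  define e where "e = enumerate A"
  define C where "C j = g ` (A \<inter> {..e j})" for j
  have "C j \<in> F" for j
    using prefixes[of "Suc (e j)"] unfolding C_def lessThan_Suc_atMost .
  moreover have "C j \<subset> C (Suc j)" for j
  proof
    show "C j \<subseteq> C (Suc j)"
      unfolding C_def e_def using enumerate_step[OF False, of j] by auto
    have "g (e (Suc j)) \<in> C (Suc j)"
      unfolding C_def e_def using enumerate_in_set[OF False] by auto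
    moreover have "g (e (Suc j)) \<notin> C j"
      unfolding C_def e_def using enumerate_step[OF False, of j] inj_eq[OF \<open>inj g\<close>] by fastforce
    ultimately show "C j \<noteq> C (Suc j)" by blast
  qed
  moreover have "(\<Union>j. C j) = g ` A"
  proof
    show "(\<Union>j. C j) \<subseteq> g ` A" unfolding C_def by blast
    show "g ` A \<subseteq> (\<Union>j. C j)"
    proof
      fix b assume "b \<in> g ` A"
      then obtain a where "a \<in> A" "b = g a" by blast
      moreover obtain j where "e j = a" using enumerate_Ex[OF False \<open>a \<in> A\<close>] unfolding e_def by blast
      ultimately show "b \<in> (\<Union>j. C j)" unfolding C_def by blast
    qed
  qed
  ultimately show ?thesis using closed unfolding ascending_union_closed_def by metis
qed

lemma has_sum_iterated_nonneg:
  fixes f :: "nat \<times> nat \<Rightarrow> real"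
  assumes nonneg: "\<And>k i. 0 \<le> f (k, i)" and inner: "\<And>k. (\<lambda>i. f (k, i)) sums g k" and "summable g"
  shows "(f has_sum (\<Sum>k. g k)) UNIV"
proof -
  have inner': "((\<lambda>i. f (k, i)) has_sum g k) UNIV" for k
    using inner nonneg by (rule sums_nonneg_imp_has_sum)
  have "0 \<le> g k" for k
    using inner'[of k] nonneg by (rule has_sum_nonneg)
  hence outer: "(g has_sum (\<Sum>k. g k)) UNIV"
    using \<open>summable g\<close> by (intro sums_nonneg_imp_has_sum) auto
  have "f summable_on UNIV \<times> UNIV"
    using inner' outer nonneg
    by (intro summable_on_SigmaI[where g = g]) (auto simp: has_sum_imp_summable)
  thus ?thesis
    using has_sum_SigmaI[where A = UNIV and B = "\<lambda>_. UNIV", OF inner' outer] by simp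
qed

lemma Dist_sums:
  assumes "bij_betw e UNIV X" "p \<in> Dist X"
  shows "(\<lambda>k. p (e k)) sums 1"
  using assms by (auto simp: Dist_def has_sum_reindex_bij_betw intro: has_sum_imp_sums)

lemma Dist_nonneg: "p \<in> Dist X \<Longrightarrow> 0 \<le> p x"
  by (simp add: Dist_def)

lemma Dist_of_sums:
  assumes e: "bij_betw e UNIV X"
    and nonneg: "\<And>x. 0 \<le> p x" and outside: "\<And>x. x \<notin> X \<Longrightarrow> p x = 0" and "(\<lambda>k. p (e k)) sums 1"
  shows "p \<in> Dist X"
proof -
  have "((\<lambda>k. p (e k)) has_sum 1) UNIV"
    by (rule sums_nonneg_imp_has_sum) (simp_all add: assms)
  hence "(p has_sum 1) X" by (simp add: has_sum_reindex_bij_betw[OF e, symmetric])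
  moreover have "countable {x. p x \<noteq> 0}"
    by (rule countable_subset[of _ "e ` UNIV"]) (use outside e in \<open>auto simp: bij_betw_def\<close>)
  ultimately show ?thesis unfolding Dist_def using nonneg outside by blast
qed

lemma Dist_point:
  fixes e :: "nat \<Rightarrow> 'a"
  assumes "bij_betw e UNIV X"
  shows "(\<lambda>x. if x = e k then 1 else 0) \<in> Dist X"
proof (rule Dist_of_sums[OF assms])
  have "(\<lambda>j. if e j = e k then 1 else 0) = (\<lambda>j. if j = k then 1 else 0 :: real)"
    using assms by (auto simp: bij_betw_def inj_eq)
  thus "(\<lambda>j. if e j = e k then 1 else 0 :: real) sums 1" using sums_single[of k "\<lambda>_. 1::real"] by simp
qed (use assms in \<open>auto simp: bij_betw_def\<close>)

lemma guaranteeing_strategy_minimax: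
  fixes f :: "'p \<Rightarrow> 'q \<Rightarrow> real"
  assumes "Q \<noteq> {}" and bounds: "\<And>p q. p \<in> P \<Longrightarrow> q \<in> Q \<Longrightarrow> a \<le> f p q \<and> f p q \<le> b"
    and "p0 \<in> P" and guarantee: "\<And>q. q \<in> Q \<Longrightarrow> (INF q\<in>Q. SUP p\<in>P. f p q) \<le> f p0 q"
  shows "\<forall>p\<in>P. (INF q\<in>Q. f p q) \<le> (INF q\<in>Q. f p0 q)"
    and "(SUP p\<in>P. INF q\<in>Q. f p q) = (INF q\<in>Q. SUP p\<in>P. f p q)"
proof -
  define v where "v = (INF q\<in>Q. SUP p\<in>P. f p q)"
  have bdd_row: "bdd_below ((\<lambda>q. f p q) ` Q)" if "p \<in> P" for p
    by (rule bdd_belowI[where m = a]) (use bounds that in auto)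
  have bdd_col: "bdd_above ((\<lambda>p. f p q) ` P)" if "q \<in> Q" for q
    by (rule bdd_aboveI[where M = b]) (use bounds that in auto)
  have sup_ge: "f p q \<le> (SUP p\<in>P. f p q)" if "p \<in> P" "q \<in> Q" for p q
    by (rule cSUP_upper[OF that(1) bdd_col[OF that(2)]])
  have inf_le_v: "(INF q\<in>Q. f p q) \<le> v" if "p \<in> P" for p
    unfolding v_def
  proof (rule cINF_greatest[OF \<open>Q \<noteq> {}\<close>])
    fix q assume "q \<in> Q"
    have "(INF q\<in>Q. f p q) \<le> f p q" by (rule cINF_lower[OF bdd_row[OF that] \<open>q \<in> Q\<close>])
    also have "\<dots> \<le> (SUP p\<in>P. f p q)" by (rule sup_ge[OF that \<open>q \<in> Q\<close>])
    finally show "(INF q\<in>Q. f p q) \<le> (SUP p\<in>P. f p q)" .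
  qed
  have v_le: "v \<le> (INF q\<in>Q. f p0 q)"
    unfolding v_def by (rule cINF_greatest[OF \<open>Q \<noteq> {}\<close> guarantee])
  show "\<forall>p\<in>P. (INF q\<in>Q. f p q) \<le> (INF q\<in>Q. f p0 q)"
  proof
    fix p assume "p \<in> P"
    from inf_le_v[OF this] v_le show "(INF q\<in>Q. f p q) \<le> (INF q\<in>Q. f p0 q)" by (rule order_trans)
  qed
  have "bdd_above ((\<lambda>p. INF q\<in>Q. f p q) ` P)"
    by (rule bdd_aboveI[where M = v]) (use inf_le_v in blast)
  hence "(INF q\<in>Q. f p0 q) \<le> (SUP p\<in>P. INF q\<in>Q. f p q)"
    by (rule cSUP_upper[OF \<open>p0 \<in> P\<close>])
  moreover have "(SUP p\<in>P. INF q\<in>Q. f p q) \<le> v"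
    by (rule cSUP_least) (use \<open>p0 \<in> P\<close> inf_le_v in auto)
  ultimately show "(SUP p\<in>P. INF q\<in>Q. f p q) = (INF q\<in>Q. SUP p\<in>P. f p q)"
    using v_le unfolding v_def by linarith
qed

locale countable_win_lose =
  fixes S :: "'a set" and T :: "'b set" and \<pi> :: "'a \<Rightarrow> 'b \<Rightarrow> real"
  assumes game: "countable_game S T \<pi>"
begin

definition row :: "nat \<Rightarrow> 'a" where "row = from_nat_into S"
definition col :: "nat \<Rightarrow> 'b" where "col = from_nat_into T"
definition W :: "nat \<Rightarrow> nat set" where "W k = {i. \<pi> (row k) (col i) = 1}"

lemma bij_row: "bij_betw row UNIV S"
  using game unfolding row_def countable_game_def by (simp add: bij_betw_from_nat_into)

lemma bij_col: "bij_betw col UNIV T"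
  using game unfolding col_def countable_game_def by (simp add: bij_betw_from_nat_into)

lemma row_in: "row k \<in> S" and col_in: "col i \<in> T"
  using bij_row bij_col by (auto simp: bij_betw_def)

lemma \<pi>_row_col: "\<pi> (row k) (col i) = indicator (W k) i"
  using game row_in col_in unfolding countable_game_def win_lose_game_def W_def
  by (auto split: split_indicator)

lemma prefix_limit_closed_W:
  assumes "ascending_union_closed (B1_down S T \<pi>)"
  shows "prefix_limit_closed W"
  unfolding prefix_limit_closed_def
proof (intro allI impI)
  fix A assume prefixes: "\<forall>m. \<exists>k. A \<inter> {..<m} \<subseteq> W k"
  have win: "col ` B \<subseteq> win_set T \<pi> (row k)" if "B \<subseteq> W k" for B k
    using that col_in unfolding W_def win_set_def by auto
  have "col ` A \<in> B1_down S T \<pi>"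
  proof (rule ascending_union_closed_image[OF assms])
    show "inj col" using bij_col by (simp add: bij_betw_def)
    show "col ` (A \<inter> {..<m}) \<in> B1_down S T \<pi>" for m
    proof -
      obtain k where "A \<inter> {..<m} \<subseteq> W k" using prefixes by blast
      hence "col ` (A \<inter> {..<m}) \<subseteq> win_set T \<pi> (row k)" by (rule win)
      thus ?thesis unfolding B1_down_def using row_in by blast
    qed
  qed
  then obtain s where "s \<in> S" "col ` A \<subseteq> win_set T \<pi> s"
    unfolding B1_down_def by blast
  moreover obtain k where "s = row k"
    using bij_row \<open>s \<in> S\<close> by (metis bij_betw_inv_into_right UNIV_I)
  ultimately show "\<exists>k. A \<subseteq> W k" unfolding W_def win_set_def by blast
qed

lemma row_payoff_bounds:
  assumes "q \<in> Dist T"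
  shows "0 \<le> row_payoff W (\<lambda>i. q (col i)) k" "row_payoff W (\<lambda>i. q (col i)) k \<le> 1"
  using row_payoff_bounds_sums[OF Dist_nonneg[OF assms] Dist_sums[OF bij_col assms]] by simp_all

lemma col_payoff_bounds:
  assumes "p \<in> Dist S"
  shows "0 \<le> col_payoff W (\<lambda>k. p (row k)) i" "col_payoff W (\<lambda>k. p (row k)) i \<le> 1"
  using col_payoff_bounds_sums[OF Dist_nonneg[OF assms] Dist_sums[OF bij_row assms]] by simp_all

lemma pi_mix_suminf:
  assumes "p \<in> Dist S" "q \<in> Dist T"
  shows "pi_mix S T \<pi> p q = (\<Sum>k. p (row k) * row_payoff W (\<lambda>i. q (col i)) k)"
    and "pi_mix S T \<pi> p q = (\<Sum>i. q (col i) * col_payoff W (\<lambda>k. p (row k)) i)"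
proof -
  define f where "f = (\<lambda>(k, i). p (row k) * q (col i) * indicator (W k) i :: real)"
  have f_nonneg: "0 \<le> f (k, i)" for k i
    using assms by (simp add: f_def Dist_nonneg)
  note p = Dist_nonneg[OF assms(1)] Dist_sums[OF bij_row assms(1)]
  note q = Dist_nonneg[OF assms(2)] Dist_sums[OF bij_col assms(2)]
  have "pi_mix S T \<pi> p q
      = infsum (\<lambda>x. (\<lambda>(s, t). p s * q t * \<pi> s t) (map_prod row col x)) (UNIV \<times> UNIV)"
    unfolding pi_mix_def by (rule infsum_reindex_bij_betw[OF bij_betw_map_prod[OF bij_row bij_col], symmetric])
  also have "(\<lambda>x. (\<lambda>(s, t). p s * q t * \<pi> s t) (map_prod row col x)) = f"
    by (auto simp: fun_eq_iff f_def \<pi>_row_col)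
  finally have pi_mix_f: "pi_mix S T \<pi> p q = infsum f UNIV" by simp
  have "(f has_sum (\<Sum>k. p (row k) * row_payoff W (\<lambda>i. q (col i)) k)) UNIV"
  proof (rule has_sum_iterated_nonneg)
    show "(\<lambda>i. f (k, i)) sums (p (row k) * row_payoff W (\<lambda>i. q (col i)) k)" for k
      using sums_mult[OF summable_sums[OF row_payoff_bounds_sums(1)[OF q, of W k]], of "p (row k)"]
      by (simp add: f_def row_payoff_def mult.assoc)
    show "summable (\<lambda>k. p (row k) * row_payoff W (\<lambda>i. q (col i)) k)"
      by (rule weighted_suminf_bounds(1)[OF p(1) sums_summable[OF p(2)]])
        (simp_all add: row_payoff_bounds[OF assms(2)])
  qed (rule f_nonneg)
  thus "pi_mix S T \<pi> p q = (\<Sum>k. p (row k) * row_payoff W (\<lambda>i. q (col i)) k)"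
    unfolding pi_mix_f by (rule infsumI)
  have "((\<lambda>(i, k). f (k, i)) has_sum (\<Sum>i. q (col i) * col_payoff W (\<lambda>k. p (row k)) i)) UNIV"
  proof (rule has_sum_iterated_nonneg)
    show "(\<lambda>k. (\<lambda>(i, k). f (k, i)) (i, k)) sums (q (col i) * col_payoff W (\<lambda>k. p (row k)) i)" for i
    proof -
      have "(\<lambda>k. p (row k) * indicator (W k) i) sums col_payoff W (\<lambda>k. p (row k)) i"
        unfolding col_payoff_def by (rule summable_sums[OF col_payoff_bounds_sums(1)[OF p]])
      from sums_mult[OF this, of "q (col i)"] show ?thesis by (simp add: f_def mult_ac)
    qed
    show "summable (\<lambda>i. q (col i) * col_payoff W (\<lambda>k. p (row k)) i)"
      by (rule weighted_suminf_bounds(1)[OF q(1) sums_summable[OF q(2)]])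
        (simp_all add: col_payoff_bounds[OF assms(1)])
  qed (simp add: f_nonneg)
  hence "(f has_sum (\<Sum>i. q (col i) * col_payoff W (\<lambda>k. p (row k)) i)) (UNIV \<times> UNIV)"
    by (subst has_sum_swap) simp
  thus "pi_mix S T \<pi> p q = (\<Sum>i. q (col i) * col_payoff W (\<lambda>k. p (row k)) i)"
    unfolding pi_mix_f by (simp add: infsumI)
qed

lemma pi_mix_le:
  assumes "p \<in> Dist S" "q \<in> Dist T" "\<And>k. row_payoff W (\<lambda>i. q (col i)) k \<le> c"
  shows "pi_mix S T \<pi> p q \<le> c"
proof -
  note p = Dist_nonneg[OF assms(1)] Dist_sums[OF bij_row assms(1)]
  have "(\<Sum>k. p (row k) * row_payoff W (\<lambda>i. q (col i)) k) \<le> (\<Sum>k. p (row k) * c)"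
  proof (rule suminf_le)
    show "summable (\<lambda>k. p (row k) * row_payoff W (\<lambda>i. q (col i)) k)"
      by (rule weighted_suminf_bounds(1)[OF p(1) sums_summable[OF p(2)]])
        (simp_all add: row_payoff_bounds[OF assms(2)])
    show "summable (\<lambda>k. p (row k) * c)" by (rule summable_mult2[OF sums_summable[OF p(2)]])
  qed (rule mult_left_mono[OF assms(3) p(1)])
  also have "\<dots> = c" using sums_mult2[OF p(2), of c] by (simp add: sums_iff)
  finally show ?thesis using pi_mix_suminf(1)[OF assms(1,2)] by simp
qed

lemma pi_mix_bounds:
  assumes "p \<in> Dist S" "q \<in> Dist T"
  shows "0 \<le> pi_mix S T \<pi> p q \<and> pi_mix S T \<pi> p q \<le> 1"
proof
  show "pi_mix S T \<pi> p q \<le> 1"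
    by (rule pi_mix_le[OF assms]) (rule row_payoff_bounds[OF assms(2)])
  show "0 \<le> pi_mix S T \<pi> p q"
    unfolding pi_mix_suminf(1)[OF assms]
    by (rule weighted_suminf_bounds(2)[OF Dist_nonneg[OF assms(1)]
          sums_summable[OF Dist_sums[OF bij_row assms(1)]]]) (simp_all add: row_payoff_bounds[OF assms(2)])
qed

definition pure :: "nat \<Rightarrow> 'a \<Rightarrow> real" where
  "pure k s = (if s = row k then 1 else 0)"

lemma pure_in_Dist: "pure k \<in> Dist S"
  unfolding pure_def by (rule Dist_point[OF bij_row])

lemma pi_mix_pure:
  assumes "q \<in> Dist T"
  shows "pi_mix S T \<pi> (pure k) q = row_payoff W (\<lambda>i. q (col i)) k"
proof -
  have "(\<lambda>j. pure k (row j) * row_payoff W (\<lambda>i. q (col i)) j)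
      = (\<lambda>j. if j = k then row_payoff W (\<lambda>i. q (col i)) j else 0)"
    using bij_row by (auto simp: pure_def bij_betw_def inj_eq)
  hence "(\<lambda>j. pure k (row j) * row_payoff W (\<lambda>i. q (col i)) j) sums row_payoff W (\<lambda>i. q (col i)) k"
    by (simp add: sums_single)
  thus ?thesis using pi_mix_suminf(1)[OF pure_in_Dist assms] by (simp add: sums_iff)
qed

lemma pure_best_response:
  assumes "prefix_limit_closed W" "q \<in> Dist T"
  obtains k where "\<And>p. p \<in> Dist S \<Longrightarrow> pi_mix S T \<pi> p q \<le> pi_mix S T \<pi> (pure k) q"
proof -
  obtain k where "\<And>k'. row_payoff W (\<lambda>i. q (col i)) k' \<le> row_payoff W (\<lambda>i. q (col i)) k"
    using best_response_exists[OF assms(1) Dist_nonneg[OF assms(2)]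
        sums_summable[OF Dist_sums[OF bij_col assms(2)]]] by blast
  hence "pi_mix S T \<pi> p q \<le> pi_mix S T \<pi> (pure k) q" if "p \<in> Dist S" for p
    unfolding pi_mix_pure[OF assms(2)] by (rule pi_mix_le[OF that assms(2)])
  thus ?thesis by (rule that)
qed

definition upper_value :: real where
  "upper_value = (INF q\<in>Dist T. SUP p\<in>Dist S. pi_mix S T \<pi> p q)"

lemma upper_value_le_best_response:
  assumes "prefix_limit_closed W" "q \<in> Dist T"
  shows "\<exists>k. upper_value \<le> row_payoff W (\<lambda>i. q (col i)) k"
proof -
  obtain k where best: "\<And>p. p \<in> Dist S \<Longrightarrow> pi_mix S T \<pi> p q \<le> pi_mix S T \<pi> (pure k) q"
    using pure_best_response[OF assms] by blast
  have "bdd_below ((\<lambda>q. SUP p\<in>Dist S. pi_mix S T \<pi> p q) ` Dist T)"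
  proof (rule bdd_belowI)
    fix x assume "x \<in> (\<lambda>q. SUP p\<in>Dist S. pi_mix S T \<pi> p q) ` Dist T"
    then obtain q' where "q' \<in> Dist T" "x = (SUP p\<in>Dist S. pi_mix S T \<pi> p q')" by blast
    moreover have "bdd_above ((\<lambda>p. pi_mix S T \<pi> p q') ` Dist S)"
      by (rule bdd_aboveI[where M = 1]) (use pi_mix_bounds \<open>q' \<in> Dist T\<close> in blast)
    hence "pi_mix S T \<pi> (pure 0) q' \<le> (SUP p\<in>Dist S. pi_mix S T \<pi> p q')"
      by (rule cSUP_upper[OF pure_in_Dist])
    ultimately have "pi_mix S T \<pi> (pure 0) q' \<le> x" by simp
    thus "0 \<le> x" using pi_mix_bounds[OF pure_in_Dist \<open>q' \<in> Dist T\<close>, of 0] by linarith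
  qed
  hence "upper_value \<le> (SUP p\<in>Dist S. pi_mix S T \<pi> p q)"
    unfolding upper_value_def by (rule cINF_lower[OF _ assms(2)])
  also have "\<dots> \<le> pi_mix S T \<pi> (pure k) q"
    using best pure_in_Dist by (intro cSUP_least) blast+
  finally show ?thesis using pi_mix_pure[OF assms(2)] by auto
qed

lemma finite_upper_value_response:
  assumes "prefix_limit_closed W" "\<And>i. 0 \<le> q i" "(\<Sum>i<n. q i) = 1"
  shows "\<exists>k. upper_value \<le> (\<Sum>i<n. q i * indicator (W k) i)"
proof -
  define a where "a i = (if i < n then q i else 0)" for i
  define qT where "qT t = (if t \<in> T then a (inv_into UNIV col t) else 0)" for t
  have qT_col: "qT (col i) = a i" for i
    using bij_col col_in by (auto simp: qT_def bij_betw_def)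
  have "a sums 1"
    using sums_If_finite_set[of "{..<n}" q] assms(3) unfolding a_def by simp
  hence "qT \<in> Dist T"
    using assms(2) by (intro Dist_of_sums[OF bij_col]) (simp_all add: qT_col, simp_all add: qT_def a_def)
  from upper_value_le_best_response[OF assms(1) this]
  obtain k where "upper_value \<le> row_payoff W a k"
    unfolding qT_col by blast
  moreover have "row_payoff W a k = (\<Sum>i<n. q i * indicator (W k) i)"
    unfolding row_payoff_def a_def by (subst suminf_finite[of "{..<n}"]) auto
  ultimately show ?thesis by auto
qed

lemma frequency_limit_upper_value:
  assumes closed: "prefix_limit_closed W"
  shows "\<exists>ks. frequency_limit W ks upper_value"
proof -
  have "\<exists>ks. ks \<noteq> [] \<and> (\<forall>i<n. upper_value - inverse (real (Suc n)) \<le> freq ks (\<lambda>k. i \<in> W k))" for n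
    using finite_game_approx_strategy[OF finite_upper_value_response[OF closed], of n
        "inverse (real (Suc n))"] by auto
  hence "\<forall>n. \<exists>ks. ks \<noteq> [] \<and> (\<forall>i<n. upper_value - inverse (real (Suc n)) \<le> freq ks (\<lambda>k. i \<in> W k))"
    by blast
  from choice[OF this] obtain ks where ks: "\<And>n. ks n \<noteq> []"
    "\<And>n i. i < n \<Longrightarrow> upper_value - inverse (real (Suc n)) \<le> freq (ks n) (\<lambda>k. i \<in> W k)"
    by blast
  obtain r where r: "strict_mono r"
    "\<And>Q. prefix_determined W Q \<Longrightarrow> convergent (\<lambda>n. freq (ks (r n)) Q)"
    using prefix_determined_freq_convergent_subseq by blast
  have "frequency_limit W (ks \<circ> r) upper_value"
  proof (rule frequency_limit.intro)
    fix n i :: nat assume "i < n"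
    with seq_suble[OF r(1), of n] have "i < r n" by simp
    moreover have "inverse (real (Suc (r n))) \<le> inverse (real (Suc n))"
      using seq_suble[OF r(1), of n] by (simp add: le_imp_inverse_le)
    ultimately show "upper_value - inverse (real (Suc n)) \<le> freq ((ks \<circ> r) n) (\<lambda>k. i \<in> W k)"
      using ks(2)[of i "r n"] unfolding o_def by linarith
  qed (use closed ks(1) r(2) in \<open>simp_all add: o_def\<close>)
  thus ?thesis by blast
qed

lemma optimal_strategy_exists:
  assumes "prefix_limit_closed W"
  shows "\<exists>p\<in>Dist S. \<forall>q\<in>Dist T. upper_value \<le> pi_mix S T \<pi> p q"
proof -
  obtain ks where "frequency_limit W ks upper_value"
    using frequency_limit_upper_value[OF assms] by blast
  then interpret frequency_limit W ks upper_value .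
  define p where "p s = (if s \<in> S then weight (inv_into UNIV row s) else 0)" for s
  have p_row: "p (row k) = weight k" for k
    using bij_row row_in by (auto simp: p_def bij_betw_def)
  have "p \<in> Dist S"
  proof (rule Dist_of_sums[OF bij_row])
    show "(\<lambda>k. p (row k)) sums 1" unfolding p_row by (rule weight_sums_1)
  qed (simp_all add: p_def weight_nonneg)
  moreover have "upper_value \<le> pi_mix S T \<pi> p q" if q: "q \<in> Dist T" for q
  proof -
    note q' = Dist_nonneg[OF q] Dist_sums[OF bij_col q]
    have "upper_value = (\<Sum>i. q (col i) * upper_value)"
      using sums_mult2[OF q'(2), of upper_value] by (simp add: sums_iff)
    also have "\<dots> \<le> (\<Sum>i. q (col i) * col_payoff W weight i)"
    proof (rule suminf_le)
      show "summable (\<lambda>i. q (col i) * col_payoff W weight i)"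
        by (rule weighted_suminf_bounds(1)[OF q'(1) sums_summable[OF q'(2)]])
          (simp_all add: col_payoff_bounds_sums[OF weight_nonneg weight_sums_1])
      show "summable (\<lambda>i. q (col i) * upper_value)"
        by (rule summable_mult2[OF sums_summable[OF q'(2)]])
      show "q (col i) * upper_value \<le> q (col i) * col_payoff W weight i" for i
        by (rule mult_left_mono[OF col_payoff_weight_ge q'(1)])
    qed
    finally show ?thesis using pi_mix_suminf(2)[OF \<open>p \<in> Dist S\<close> q] by (simp add: p_row)
  qed
  ultimately show ?thesis by blast
qed

end

theorem theorem2p2:
  fixes S :: "'a set" and T :: "'b set" and \<pi> :: "'a \<Rightarrow> 'b \<Rightarrow> real"
  assumes "countable_game S T \<pi>"
    and "ascending_union_closed (B1_down S T \<pi>)"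
  shows "(\<forall>q\<in>Dist T. \<exists>p\<in>Dist S. \<forall>p'\<in>Dist S. pi_mix S T \<pi> p' q \<le> pi_mix S T \<pi> p q)
    \<and> (\<exists>p\<in>Dist S. \<forall>p'\<in>Dist S.
          (INF q\<in>Dist T. pi_mix S T \<pi> p' q) \<le> (INF q\<in>Dist T. pi_mix S T \<pi> p q))
    \<and> (SUP p\<in>Dist S. INF q\<in>Dist T. pi_mix S T \<pi> p q)
        = (INF q\<in>Dist T. SUP p\<in>Dist S. pi_mix S T \<pi> p q)"
proof -
  interpret countable_win_lose S T \<pi> by (rule countable_win_lose.intro[OF assms(1)])
  have closed: "prefix_limit_closed W" by (rule prefix_limit_closed_W[OF assms(2)])
  have best_response: "\<forall>q\<in>Dist T. \<exists>p\<in>Dist S. \<forall>p'\<in>Dist S. pi_mix S T \<pi> p' q \<le> pi_mix S T \<pi> p q"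
  proof
    fix q assume "q \<in> Dist T"
    then obtain k where "\<And>p. p \<in> Dist S \<Longrightarrow> pi_mix S T \<pi> p q \<le> pi_mix S T \<pi> (pure k) q"
      using pure_best_response[OF closed] by blast
    thus "\<exists>p\<in>Dist S. \<forall>p'\<in>Dist S. pi_mix S T \<pi> p' q \<le> pi_mix S T \<pi> p q"
      using pure_in_Dist by blast
  qed
  obtain p0 where "p0 \<in> Dist S" and guarantee: "\<And>q. q \<in> Dist T \<Longrightarrow> upper_value \<le> pi_mix S T \<pi> p0 q"
    using optimal_strategy_exists[OF closed] by blast
  have "Dist T \<noteq> {}" using Dist_point[OF bij_col] by blast
  note minimax = guaranteeing_strategy_minimax[where f = "pi_mix S T \<pi>" and a = 0 and b = 1,
      OF \<open>Dist T \<noteq> {}\<close> pi_mix_bounds \<open>p0 \<in> Dist S\<close> guarantee[unfolded upper_value_def]]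
  show ?thesis using best_response minimax \<open>p0 \<in> Dist S\<close> by blast
qed

end
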